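(* Let $s=(s_{ik})$ be an $N\times K$ matrix with i.i.d. $\mathcal N(0,1)$ entries, $K/N=\beta$. For $x^0\in\{\pm1\}^K$ let $s^0$ be the $N\times K$ matrix with entries $s_{ik}x^0_k$, and let $\mathbf 1$ denote the all-ones vector in $\mathbb R^K$. For $B>0$ define $$G=\{s:\ \|s^0(x-\mathbf 1)\|^2\le BN\ \text{for all } x,x^0\in\{\pm1\}^K\}.$$ Then $\mathbb P(G^c)\le 3^K2^{N/2}e^{-\frac{B}{16\beta}}$. *)

theory Defs
  imports "HOL-Probability.Probability"
begin

definition pm1_vecs :: "nat \<Rightarrow> (nat \<Rightarrow> real) set" where
  "pm1_vecs K = {x. \<forall>k<K. x k = -1 \<or> x k = 1}"

definition sqnorm_s0 :: "nat \<Rightarrow> nat \<Rightarrow> (nat \<Rightarrow> nat \<Rightarrow> real) \<Rightarrow> (nat \<Rightarrow> real) \<Rightarrow> (nat \<Rightarrow> real) \<Rightarrow> real" where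
  "sqnorm_s0 N K s x0 x = (\<Sum>i<N. (\<Sum>k<K. (s i k * x0 k) * (x k - 1))\<^sup>2)"

definition good_event :: "nat \<Rightarrow> nat \<Rightarrow> real \<Rightarrow> (nat \<Rightarrow> nat \<Rightarrow> real) \<Rightarrow> bool" where
  "good_event N K B s \<longleftrightarrow> (\<forall>x\<in>pm1_vecs K. \<forall>x0\<in>pm1_vecs K. sqnorm_s0 N K s x0 x \<le> B * real N)"

end

theory Submission
  imports Defs
begin

text \<open>
  For a fixed pair of sign vectors, the vector \<open>c = x\<^sup>0 \<circ> (x - \<one>)\<close> has entries in
  \<open>{-2, 0, 2}\<close>, and the \<open>N\<close> coordinates of \<open>s\<^sup>0 (x - \<one>)\<close> are independent centred
  Gaussians of variance \<open>v = \<parallel>c\<parallel>\<^sup>2 \<le> 4K\<close>. The Chernoff bound with parameter \<open>1/(4v)\<close> and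
  \<open>\<bbbE> exp (Y\<^sup>2/(4v)) = \<surd>2\<close> give probability at most \<open>2\<^bsup>N/2\<^esup> exp (-BN/(4v))\<close> that the
  squared norm exceeds \<open>BN\<close>; a union bound over the at most \<open>3\<^sup>K\<close> vectors \<open>c\<close> finishes.
\<close>

lemma normal_density_mult_exp_square:
  assumes "v > 0"
  shows "normal_density 0 (sqrt v) x * exp (x\<^sup>2 / (4 * v))
           = sqrt 2 * normal_density 0 (sqrt (2 * v)) x"
proof -
  have exp_eq: "exp (- (x\<^sup>2 / (2 * v))) * exp (x\<^sup>2 / (4 * v)) = exp (- (x\<^sup>2 / (4 * v)))"
    unfolding mult_exp_exp using assms by (simp add: field_simps)
  have sqrt_eq: "sqrt (4 * pi * v) = sqrt 2 * sqrt (2 * pi * v)"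
    by (simp add: real_sqrt_mult[symmetric] algebra_simps)
  have "normal_density 0 (sqrt v) x * exp (x\<^sup>2 / (4 * v))
          = exp (- (x\<^sup>2 / (2 * v))) * exp (x\<^sup>2 / (4 * v)) / sqrt (2 * pi * v)"
    unfolding normal_density_def using assms by simp
  also have "\<dots> = sqrt 2 * exp (- (x\<^sup>2 / (4 * v))) / sqrt (4 * pi * v)"
    unfolding exp_eq sqrt_eq by simp
  also have "\<dots> = sqrt 2 * normal_density 0 (sqrt (2 * v)) x"
    unfolding normal_density_def using assms by simp
  finally show ?thesis .
qed

lemma (in prob_space) nn_integral_exp_square_normal:
  assumes Y: "distributed M lborel Y (normal_density 0 (sqrt v))" and v: "v > 0"
  shows "(\<integral>\<^sup>+\<omega>. ennreal (exp ((Y \<omega>)\<^sup>2 / (4 * v))) \<partial>M) = ennreal (sqrt 2)"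
proof -
  have "(\<integral>\<^sup>+\<omega>. ennreal (exp ((Y \<omega>)\<^sup>2 / (4 * v))) \<partial>M)
          = (\<integral>\<^sup>+x. ennreal (normal_density 0 (sqrt v) x) * ennreal (exp (x\<^sup>2 / (4 * v))) \<partial>lborel)"
    by (rule distributed_nn_integral[OF Y, symmetric]) simp
  also have "\<dots> = (\<integral>\<^sup>+x. ennreal (sqrt 2) * ennreal (normal_density 0 (sqrt (2 * v)) x) \<partial>lborel)"
    by (intro nn_integral_cong)
      (simp add: ennreal_mult'[symmetric] normal_density_mult_exp_square[OF v])
  also have "\<dots> = ennreal (sqrt 2) * (\<integral>\<^sup>+x. ennreal (normal_density 0 (sqrt (2 * v)) x) \<partial>lborel)"
    by (rule nn_integral_cmult) simp
  also have "(\<integral>\<^sup>+x. ennreal (normal_density 0 (sqrt (2 * v)) x) \<partial>lborel) = 1"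
    using v by (subst nn_integral_eq_integral)
      (auto intro!: integral_normal_density)
  finally show ?thesis by simp
qed

lemma (in prob_space) distributed_weighted_sum_std_normal:
  assumes I: "finite I" and ind: "indep_vars (\<lambda>_. borel) X I"
    and std: "\<And>k. k \<in> I \<Longrightarrow> distributed M lborel (X k) std_normal_density"
    and v: "(\<Sum>k\<in>I. (c k)\<^sup>2) > 0"
  shows "distributed M lborel (\<lambda>\<omega>. \<Sum>k\<in>I. c k * X k \<omega>)
           (normal_density 0 (sqrt (\<Sum>k\<in>I. (c k)\<^sup>2)))"
proof -
  define J where "J = {k \<in> I. c k \<noteq> 0}"
  have "J \<noteq> {}"
    using v by (auto simp: J_def intro: ccontr)
  have sum_J: "(\<Sum>k\<in>I. c k * f k) = (\<Sum>k\<in>J. c k * f k)" for f :: "'b \<Rightarrow> real"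
    using I unfolding J_def by (intro sum.mono_neutral_right) auto
  have "indep_vars (\<lambda>_. borel) (\<lambda>k \<omega>. c k * X k \<omega>) J"
    by (rule indep_vars_compose2[OF indep_vars_subset[OF ind]]) (auto simp: J_def)
  moreover have "distributed M lborel (\<lambda>\<omega>. c k * X k \<omega>) (normal_density 0 \<bar>c k\<bar>)"
    if "k \<in> J" for k
    using normal_density_affine[OF std, of k "c k" 0] that by (simp add: J_def)
  ultimately have "distributed M lborel (\<lambda>\<omega>. \<Sum>k\<in>J. c k * X k \<omega>)
                     (normal_density (\<Sum>k\<in>J. 0) (sqrt (\<Sum>k\<in>J. \<bar>c k\<bar>\<^sup>2)))"
    using I \<open>J \<noteq> {}\<close> by (intro sum_indep_normal) (auto simp: J_def)
  then show ?thesis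
    using sum_J[of c] sum_J[of "\<lambda>k. X k _"] by (simp add: power2_eq_square)
qed

lemma (in prob_space) emeasure_sum_squares_normal_ge:
  assumes I: "finite I" and ind: "indep_vars (\<lambda>_. borel) Y I"
    and normal: "\<And>i. i \<in> I \<Longrightarrow> distributed M lborel (Y i) (normal_density 0 (sqrt v))"
    and v: "v > 0"
  shows "emeasure M {\<omega> \<in> space M. b \<le> (\<Sum>i\<in>I. (Y i \<omega>)\<^sup>2)}
           \<le> ennreal (exp (- b / (4 * v)) * 2 powr (card I / 2))"
proof -
  have [measurable]: "Y i \<in> borel_measurable M" if "i \<in> I" for i
    using distributed_measurable[OF normal[OF that]] by simp
  have "emeasure M {\<omega> \<in> space M. b \<le> (\<Sum>i\<in>I. (Y i \<omega>)\<^sup>2)}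
          \<le> ennreal (exp (- (1 / (4 * v)) * b))
            * (\<integral>\<^sup>+\<omega>. ennreal (exp (1 / (4 * v) * (\<Sum>i\<in>I. (Y i \<omega>)\<^sup>2))) * indicator (space M) \<omega> \<partial>M)"
    using v by (intro Chernoff_ineq_nn_integral_ge) auto
  also have "(\<integral>\<^sup>+\<omega>. ennreal (exp (1 / (4 * v) * (\<Sum>i\<in>I. (Y i \<omega>)\<^sup>2))) * indicator (space M) \<omega> \<partial>M)
               = (\<integral>\<^sup>+\<omega>. (\<Prod>i\<in>I. ennreal (exp ((Y i \<omega>)\<^sup>2 / (4 * v)))) \<partial>M)"
    using I by (intro nn_integral_cong) (simp add: sum_distrib_left exp_sum prod_ennreal)
  also have "\<dots> = (\<Prod>i\<in>I. \<integral>\<^sup>+\<omega>. ennreal (exp ((Y i \<omega>)\<^sup>2 / (4 * v))) \<partial>M)"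
    using I by (intro indep_vars_nn_integral indep_vars_compose2[OF ind]) auto
  also have "\<dots> = ennreal (sqrt 2) ^ card I"
    using normal v by (simp add: nn_integral_exp_square_normal)
  also have "\<dots> = ennreal (2 powr (card I / 2))"
    by (simp add: ennreal_power powr_half_sqrt[symmetric] powr_realpow[symmetric] powr_powr)
  finally show ?thesis
    by (simp add: ennreal_mult' mult.commute)
qed

lemma (in prob_space) indep_vars_matrix_row:
  fixes s :: "'i \<Rightarrow> 'j \<Rightarrow> 'a \<Rightarrow> 'b::topological_space"
  assumes ind: "indep_vars (\<lambda>_. borel) (\<lambda>(i, k). s i k) (I \<times> J)" and i: "i \<in> I"
  shows "indep_vars (\<lambda>_. borel) (s i) J"
proof -
  have "indep_vars (\<lambda>k. PiM {(i, k)} (\<lambda>_. borel))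
          (\<lambda>k \<omega>. restrict (\<lambda>p. (\<lambda>(i, k). s i k) p \<omega>) {(i, k)}) J"
    using i by (intro indep_vars_restrict[OF ind]) (auto simp: disjoint_family_on_def)
  then have "indep_vars (\<lambda>_. borel)
               (\<lambda>k \<omega>. (\<lambda>f. f (i, k)) (restrict (\<lambda>p. (\<lambda>(i, k). s i k) p \<omega>) {(i, k)})) J"
    by (rule indep_vars_compose2) measurable
  then show ?thesis by simp
qed

lemma (in prob_space) indep_vars_matrix_row_forms:
  fixes s :: "'i \<Rightarrow> 'j \<Rightarrow> 'a \<Rightarrow> real" and c :: "'j \<Rightarrow> real"
  assumes ind: "indep_vars (\<lambda>_. borel) (\<lambda>(i, k). s i k) (I \<times> J)"
  shows "indep_vars (\<lambda>_. borel) (\<lambda>i \<omega>. \<Sum>k\<in>J. c k * s i k \<omega>) I"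
proof -
  have "indep_vars (\<lambda>i. PiM ({i} \<times> J) (\<lambda>_. borel))
          (\<lambda>i \<omega>. restrict (\<lambda>p. (\<lambda>(i, k). s i k) p \<omega>) ({i} \<times> J)) I"
    by (intro indep_vars_restrict[OF ind]) (auto simp: disjoint_family_on_def)
  then have "indep_vars (\<lambda>_. borel) (\<lambda>i \<omega>. (\<lambda>f. \<Sum>k\<in>J. c k * f (i, k))
               (restrict (\<lambda>p. (\<lambda>(i, k). s i k) p \<omega>) ({i} \<times> J))) I"
    by (rule indep_vars_compose2)
      (auto intro!: borel_measurable_sum borel_measurable_times measurable_component_singleton)
  then show ?thesis by simp
qed

lemma (in prob_space) prob_gaussian_matrix_form_gt:
  fixes s :: "'i \<Rightarrow> 'j \<Rightarrow> 'a \<Rightarrow> real" and c :: "'j \<Rightarrow> real" and B :: real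
  assumes I: "finite I" and J: "finite J"
    and ind: "indep_vars (\<lambda>_. borel) (\<lambda>(i, k). s i k) (I \<times> J)"
    and std: "\<And>i k. i \<in> I \<Longrightarrow> k \<in> J \<Longrightarrow> distributed M lborel (s i k) std_normal_density"
    and c: "\<And>k. k \<in> J \<Longrightarrow> \<bar>c k\<bar> \<le> 2" and B: "B \<ge> 0"
  shows "prob {\<omega> \<in> space M. B * card I < (\<Sum>i\<in>I. (\<Sum>k\<in>J. c k * s i k \<omega>)\<^sup>2)}
           \<le> 2 powr (card I / 2) * exp (- B * card I / (16 * real (card J)))"
proof (cases "(\<Sum>k\<in>J. (c k)\<^sup>2) = 0")
  case True
  then have "c k = 0" if "k \<in> J" for k
    using J that by (subst (asm) sum_nonneg_eq_0_iff) auto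
  then have empty: "{\<omega> \<in> space M. B * card I < (\<Sum>i\<in>I. (\<Sum>k\<in>J. c k * s i k \<omega>)\<^sup>2)} = {}"
    using B by (simp add: not_less)
  show ?thesis unfolding empty by simp
next
  case False
  define v where "v = (\<Sum>k\<in>J. (c k)\<^sup>2)"
  have v: "v > 0"
    using False unfolding v_def by (simp add: sum_nonneg order_le_neq_trans)
  have "v \<le> (\<Sum>k\<in>J. 4)"
    unfolding v_def using c abs_le_square_iff[of "c _" 2] by (intro sum_mono) auto
  then have v_le: "v \<le> 4 * card J" by simp
  have [measurable]: "s i k \<in> borel_measurable M" if "i \<in> I" "k \<in> J" for i k
    using distributed_measurable[OF std[OF that]] by simp
  have rows: "distributed M lborel (\<lambda>\<omega>. \<Sum>k\<in>J. c k * s i k \<omega>) (normal_density 0 (sqrt v))"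
    if "i \<in> I" for i
    using J v std that unfolding v_def
    by (intro distributed_weighted_sum_std_normal indep_vars_matrix_row[OF ind]) auto
  let ?Q = "\<lambda>\<omega>. \<Sum>i\<in>I. (\<Sum>k\<in>J. c k * s i k \<omega>)\<^sup>2"
  have "prob {\<omega> \<in> space M. B * card I < ?Q \<omega>} \<le> prob {\<omega> \<in> space M. B * card I \<le> ?Q \<omega>}"
    using I J by (intro finite_measure_mono) auto
  also have "\<dots> \<le> exp (- (B * card I) / (4 * v)) * 2 powr (card I / 2)"
    using emeasure_sum_squares_normal_ge[OF I indep_vars_matrix_row_forms[OF ind] rows v]
    by (simp add: emeasure_eq_measure)
  also have "\<dots> \<le> exp (- B * card I / (16 * real (card J))) * 2 powr (card I / 2)"
    using v v_le B by (intro mult_right_mono) (auto intro!: divide_left_mono)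
  finally show ?thesis by (simp add: mult.commute)
qed

lemma not_good_event_witness:
  assumes "\<not> good_event N K B s"
  shows "\<exists>c \<in> PiE {..<K} (\<lambda>_. {-2, 0, 2}). B * N < (\<Sum>i<N. (\<Sum>k<K. c k * s i k)\<^sup>2)"
proof -
  obtain x x0 where x: "x \<in> pm1_vecs K" and x0: "x0 \<in> pm1_vecs K"
    and gt: "B * N < sqnorm_s0 N K s x0 x"
    using assms unfolding good_event_def by (auto simp: not_le)
  define c where "c = restrict (\<lambda>k. x0 k * (x k - 1)) {..<K}"
  have "c \<in> PiE {..<K} (\<lambda>_. {-2, 0, 2})"
    using x x0 unfolding c_def pm1_vecs_def by force
  moreover have "sqnorm_s0 N K s x0 x = (\<Sum>i<N. (\<Sum>k<K. c k * s i k)\<^sup>2)"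
    unfolding sqnorm_s0_def c_def by (intro sum.cong refl arg_cong[where f="\<lambda>z. z\<^sup>2"]) auto
  ultimately show ?thesis using gt by auto
qed

theorem lemma8:
  fixes M :: "'a measure" and s :: "nat \<Rightarrow> nat \<Rightarrow> 'a \<Rightarrow> real"
    and N K :: nat and B \<beta> :: real
  assumes "prob_space M"
    and "prob_space.indep_vars M (\<lambda>_. borel) (\<lambda>(i, k). s i k) ({..<N} \<times> {..<K})"
    and "\<And>i k. i < N \<Longrightarrow> k < K \<Longrightarrow> distributed M lborel (s i k) std_normal_density"
    and "\<beta> = real K / real N"
    and "B > 0"
  shows "measure M {\<omega> \<in> space M. \<not> good_event N K B (\<lambda>i k. s i k \<omega>)}
           \<le> 3 ^ K * 2 powr (real N / 2) * exp (- B / (16 * \<beta>))"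
proof -
  interpret prob_space M by fact
  define C where "C = PiE {..<K} (\<lambda>_. {-2, 0, 2 :: real})"
  define E where "E c = {\<omega> \<in> space M. B * N < (\<Sum>i<N. (\<Sum>k<K. c k * s i k \<omega>)\<^sup>2)}" for c
  have [measurable]: "s i k \<in> borel_measurable M" if "i < N" "k < K" for i k
    using distributed_measurable[OF assms(3)[OF that]] by simp
  have E_events: "E c \<in> events" for c
    unfolding E_def by measurable
  have E_bound: "prob (E c) \<le> 2 powr (N / 2) * exp (- B * N / (16 * real K))" if "c \<in> C" for c
  proof -
    have "c k \<in> {-2, 0, 2}" if "k < K" for k
      using \<open>c \<in> C\<close> that by (simp add: C_def PiE_iff)
    then have "\<bar>c k\<bar> \<le> 2" if "k < K" for k
      using that by fastforce
    then show ?thesis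
      using prob_gaussian_matrix_form_gt[of "{..<N}" "{..<K}" s c B] assms(2,3,5)
      by (simp add: E_def)
  qed
  have "finite C"
    by (simp add: C_def finite_PiE)
  have "{\<omega> \<in> space M. \<not> good_event N K B (\<lambda>i k. s i k \<omega>)} \<subseteq> (\<Union>c\<in>C. E c)"
    using not_good_event_witness by (auto simp: C_def E_def)
  then have "prob {\<omega> \<in> space M. \<not> good_event N K B (\<lambda>i k. s i k \<omega>)} \<le> prob (\<Union>c\<in>C. E c)"
    using \<open>finite C\<close> E_events by (intro finite_measure_mono sets.finite_UN) auto
  also have "\<dots> \<le> (\<Sum>c\<in>C. prob (E c))"
    using \<open>finite C\<close> E_events by (intro measure_UNION_le) auto
  also have "\<dots> \<le> card C * (2 powr (N / 2) * exp (- B * N / (16 * real K)))"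
    using E_bound by (rule sum_bounded_above)
  also have "card C = (3::real) ^ K"
    by (simp add: C_def card_PiE)
  also have "- B * N / (16 * real K) = - B / (16 * \<beta>)"
    \<comment> \<open>for \<open>N = 0\<close> or \<open>K = 0\<close> both sides are \<open>0\<close>, as \<open>x / 0 = 0\<close>\<close>
    unfolding assms(4) by (cases "N = 0"; cases "K = 0") (simp_all add: field_simps)
  finally show ?thesis by (simp only: mult.assoc)
qed

end
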